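(* Let $\mu_1,\mu_2$ be two mass distributions in $\mathbb{R}^2$ and let $q$ be a point of $\mathbb{R}^2$. Then there exist two lines $\ell_1,\ell_2$ such that $\{\ell_1,\ell_2\}$ simultaneously bisects $\mu_1,\mu_2$, and both $\ell_1$ and $\ell_2$ go through $q$.
   Context: A mass distribution $\mu$ on $\mathbb{R}^2$ is a measure such that all open subsets are measurable, $0<\mu(\mathbb{R}^2)<\infty$, and $\mu(S)=0$ for every lower-dimensional subset $S$. For a finite set $\mathcal{L}$ of oriented lines, each $\ell\in\mathcal{L}$ has positive side $\ell^+=\{x: g(x)\ge 0\}$ for a defining affine function $g$. Let $\lambda(p)$ be the number of lines of $\mathcal{L}$ having $p$ on their positive side, $R^+=\{p:\lambda(p)\text{ even}\}$, $R^-=\{p:\lambda(p)\text{ odd}\}$. $\mathcal{L}$ simultaneously bisects $\mu_1,\dots,\mu_k$ if $\mu_i(R^+)=\mu_i(R^-)$ for all $i$; an unoriented set of lines bisects if some orientation does. *)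

theory Defs
  imports "HOL-Analysis.Analysis"
begin

text \<open>Mass distribution on the plane (points are of type real^2).
  Lower-dimensional sets = (measurable) sets whose affine dimension is below 2.\<close>
definition mass_distribution :: "(real^2) measure \<Rightarrow> bool" where
  "mass_distribution M \<longleftrightarrow>
     space M = UNIV \<and>
     (\<forall>S. open S \<longrightarrow> S \<in> sets M) \<and>
     0 < emeasure M UNIV \<and> emeasure M UNIV < \<infinity> \<and>
     (\<forall>S \<in> sets M. aff_dim S < 2 \<longrightarrow> emeasure M S = 0)"

text \<open>An oriented line is given by its defining affine function g(x) = a \<bullet> x + b, a \<noteq> 0.
  A finite family of oriented lines is given as a list of such pairs.\<close>
definition oriented_line :: "(real^2) \<times> real \<Rightarrow> bool" where
  "oriented_line l \<longleftrightarrow> fst l \<noteq> 0"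

definition line_set :: "(real^2) \<times> real \<Rightarrow> (real^2) set" where
  "line_set l = {x. fst l \<bullet> x + snd l = 0}"

definition pos_side :: "(real^2) \<times> real \<Rightarrow> (real^2) set" where
  "pos_side l = {x. fst l \<bullet> x + snd l \<ge> 0}"

definition lambda_count :: "((real^2) \<times> real) list \<Rightarrow> real^2 \<Rightarrow> nat" where
  "lambda_count Ls p = length (filter (\<lambda>l. p \<in> pos_side l) Ls)"

definition R_plus :: "((real^2) \<times> real) list \<Rightarrow> (real^2) set" where
  "R_plus Ls = {p. even (lambda_count Ls p)}"

definition R_minus :: "((real^2) \<times> real) list \<Rightarrow> (real^2) set" where
  "R_minus Ls = {p. odd (lambda_count Ls p)}"

definition bisects :: "((real^2) \<times> real) list \<Rightarrow> (real^2) measure \<Rightarrow> bool" where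
  "bisects Ls M \<longleftrightarrow> emeasure M (R_plus Ls) = emeasure M (R_minus Ls)"

end

theory Submission
  imports Defs
begin

text \<open>Parametrise the oriented lines through \<open>q\<close> by the angle \<open>t\<close> of their direction, so that
  turning a line by \<open>\<pi>\<close> reverses its orientation, and let \<open>V(a, b)\<close> be the fraction of a mass
  lying in the double wedge \<open>R\<^sup>-\<close> of the lines at angles \<open>a\<close> and \<open>b\<close>. Then \<open>V\<close> is continuous,
  \<open>V(a, a + \<pi>) = 1\<close>, \<open>V\<close> is invariant under turning both lines by \<open>\<pi>\<close>, and \<open>V\<close> is additive over
  angles \<open>a \<le> b \<le> c \<le> a + \<pi>\<close>, since the double wedges of \<open>(a, b)\<close> and \<open>(b, c)\<close> overlap only
  on lines. For two masses, \<open>V\<^sub>1(x, x + y) - V\<^sub>2(x, x + y) = D(x + y) - D(x)\<close>, where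
  \<open>D(t) = V\<^sub>1(0, t) - V\<^sub>2(0, t)\<close> on \<open>[0, \<pi>]\<close> and \<open>D(t) = D(t - \<pi>)\<close> on \<open>[\<pi>, 2\<pi>]\<close>; so this
  difference is \<open>\<le> 0\<close> for all \<open>y\<close> when \<open>x\<close> maximises \<open>D\<close> on \<open>[0, \<pi>]\<close>, and \<open>\<ge> 0\<close> when \<open>x\<close>
  minimises it. As \<open>V\<^sub>1 + V\<^sub>2 - 1\<close> runs from \<open>-1\<close> at \<open>y = 0\<close> to \<open>1\<close> at \<open>y = \<pi>\<close>, the
  Poincare-Miranda theorem on the rectangle between these two values of \<open>x\<close> and \<open>y \<in> [0, \<pi>]\<close>
  gives angles at which \<open>V\<^sub>1 = V\<^sub>2 = 1/2\<close>.\<close>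

lemma mass_distribution_space: "mass_distribution M \<Longrightarrow> space M = UNIV"
  by (simp add: mass_distribution_def)

lemma mass_distribution_finite_measure: "mass_distribution M \<Longrightarrow> finite_measure M"
  by (rule finite_measureI) (auto simp: mass_distribution_def)

lemma mass_distribution_closed_sets:
  assumes "mass_distribution M" "closed S"
  shows "S \<in> sets M"
proof -
  have "- S \<in> sets M" using assms by (simp add: mass_distribution_def open_Compl)
  then have "space M - (- S) \<in> sets M" by (rule sets.compl_sets)
  then show ?thesis using mass_distribution_space[OF assms(1)] by simp
qed

lemma mass_distribution_total_pos:
  assumes "mass_distribution M"
  shows "0 < measure M UNIV"
proof -
  interpret finite_measure M by (rule mass_distribution_finite_measure[OF assms])
  show ?thesis using assms emeasure_eq_measure[of UNIV] by (simp add: mass_distribution_def)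
qed

lemma closed_pos_side: "closed (pos_side l)"
  unfolding pos_side_def by (intro closed_Collect_le continuous_intros)

lemma closed_line_set: "closed (line_set l)"
  unfolding line_set_def by (intro closed_Collect_eq continuous_intros)

lemma line_set_null:
  assumes "mass_distribution M" "oriented_line l"
  shows "line_set l \<in> null_sets M"
proof -
  have "line_set l = {x. fst l \<bullet> x = - snd l}" by (auto simp: line_set_def)
  then have "aff_dim (line_set l) < 2" using assms(2) by (simp add: oriented_line_def)
  moreover have "line_set l \<in> sets M" using assms(1) closed_line_set by (rule mass_distribution_closed_sets)
  ultimately show ?thesis using assms(1) by (auto simp: mass_distribution_def null_sets_def)
qed

lemma R_plus_eq_Compl_R_minus: "R_plus Ls = - R_minus Ls"
  by (auto simp: R_plus_def R_minus_def)

lemma R_minus_Cons: "R_minus (l # Ls) = sym_diff (pos_side l) (R_minus Ls)"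
  by (auto simp: R_minus_def lambda_count_def)

lemma R_minus_pair: "R_minus [l1, l2] = {p. (p \<in> pos_side l1) \<noteq> (p \<in> pos_side l2)}"
  by (auto simp: R_minus_def lambda_count_def)

lemma R_minus_sets:
  assumes "mass_distribution M"
  shows "R_minus Ls \<in> sets M"
proof (induction Ls)
  case Nil
  show ?case by (simp add: R_minus_def lambda_count_def)
next
  case (Cons l Ls)
  moreover have "pos_side l \<in> sets M"
    using assms closed_pos_side by (rule mass_distribution_closed_sets)
  ultimately show ?case by (auto simp: R_minus_Cons)
qed

lemma bisects_iff_half_mass:
  assumes "mass_distribution M"
  shows "bisects Ls M \<longleftrightarrow> measure M (R_minus Ls) = measure M UNIV / 2"
proof -
  interpret finite_measure M by (rule mass_distribution_finite_measure[OF assms])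
  have "bisects Ls M \<longleftrightarrow> measure M (R_plus Ls) = measure M (R_minus Ls)"
    by (simp add: bisects_def emeasure_eq_measure)
  moreover have "measure M (R_plus Ls) = measure M UNIV - measure M (R_minus Ls)"
    using finite_measure_compl[OF R_minus_sets[OF assms]] mass_distribution_space[OF assms]
    by (simp add: R_plus_eq_Compl_R_minus Compl_eq_Diff_UNIV)
  ultimately show ?thesis by linarith
qed

definition angle_normal :: "real \<Rightarrow> real^2" where
  "angle_normal t = vector [- sin t, cos t]"

text \<open>The line through \<open>q\<close> with direction \<open>(cos t, sin t)\<close>, its positive side to the left.\<close>
definition line_at :: "real^2 \<Rightarrow> real \<Rightarrow> (real^2) \<times> real" where
  "line_at q t = (angle_normal t, - (angle_normal t \<bullet> q))"

lemma angle_normal_inner: "angle_normal t \<bullet> z = cos t * z$2 - sin t * z$1"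
  by (simp add: angle_normal_def inner_vec_def UNIV_2 vector_2)

lemma angle_normal_nonzero: "angle_normal t \<noteq> 0"
proof
  assume "angle_normal t = 0"
  moreover have "angle_normal t $ 1 = - sin t" "angle_normal t $ 2 = cos t"
    by (simp_all add: angle_normal_def)
  ultimately have "sin t = 0" "cos t = 0" by auto
  then show False using sin_cos_squared_add[of t] by simp
qed

lemma angle_normal_add_pi: "angle_normal (t + pi) = - angle_normal t"
  by (simp add: angle_normal_def sin_add cos_add vec_eq_iff forall_2)

lemma oriented_line_line_at: "oriented_line (line_at q t)"
  by (simp add: oriented_line_def line_at_def angle_normal_nonzero)

lemma mem_pos_side_line_at: "p \<in> pos_side (line_at q t) \<longleftrightarrow> 0 \<le> angle_normal t \<bullet> (p - q)"
  by (simp add: pos_side_def line_at_def inner_diff_right)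

lemma mem_line_set_line_at: "p \<in> line_set (line_at q t) \<longleftrightarrow> angle_normal t \<bullet> (p - q) = 0"
  by (simp add: line_set_def line_at_def inner_diff_right)

lemma line_set_line_at_neq:
  assumes "0 < y" "y < pi"
  shows "line_set (line_at q x) \<noteq> line_set (line_at q (x + y))"
proof -
  define p :: "real^2" where "p = q + vector [cos x, sin x]"
  have "angle_normal t \<bullet> (p - q) = sin (x - t)" for t
    by (simp add: p_def angle_normal_inner vector_2 sin_diff algebra_simps)
  then have "p \<in> line_set (line_at q x)" "p \<notin> line_set (line_at q (x + y))"
    using sin_gt_zero[OF assms] by (auto simp: mem_line_set_line_at)
  then show ?thesis by blast
qed

text \<open>Multiplying the identity \<open>sin (c - b) A + sin (b - a) C = sin (c - a) B\<close> by \<open>B\<close>, the two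
  sign changes make the left side \<open>\<le> 0\<close> and the right side \<open>\<ge> 0\<close>, so \<open>sin (c - a) = 0\<close>.\<close>
lemma angle_normal_sign_changes_once:
  assumes "a \<le> b" "b \<le> c" "c \<le> a + pi"
    and "angle_normal a \<bullet> z \<noteq> 0" "angle_normal b \<bullet> z \<noteq> 0" "angle_normal c \<bullet> z \<noteq> 0"
  shows "(0 \<le> angle_normal a \<bullet> z) = (0 \<le> angle_normal b \<bullet> z) \<or>
         (0 \<le> angle_normal b \<bullet> z) = (0 \<le> angle_normal c \<bullet> z)"
proof (rule ccontr)
  define A B C where "A = angle_normal a \<bullet> z" and "B = angle_normal b \<bullet> z" and "C = angle_normal c \<bullet> z"
  assume "\<not> ?thesis"
  then have opposite: "A * B < 0" "C * B < 0"
    using assms(4-6) by (auto simp: A_def B_def C_def mult_less_0_iff)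
  have identity: "sin (c - b) * (A * B) + sin (b - a) * (C * B) = sin (c - a) * B\<^sup>2"
    by (simp add: A_def B_def C_def angle_normal_inner sin_diff power2_eq_square algebra_simps)
  have "0 \<le> sin (c - b)" "0 \<le> sin (b - a)" "0 \<le> sin (c - a)"
    using assms(1-3) by (auto intro!: sin_ge_zero)
  then have "sin (c - b) * (A * B) \<le> 0" "sin (b - a) * (C * B) \<le> 0"
    using opposite by (simp_all add: mult_nonneg_nonpos)
  then have "sin (c - a) * B\<^sup>2 \<le> 0" using identity by linarith
  moreover have "0 < B\<^sup>2" using assms(5) by (simp add: B_def)
  ultimately have "sin (c - a) = 0"
    using \<open>0 \<le> sin (c - a)\<close> by (simp add: mult_le_0_iff)
  then have "c = a \<or> c = a + pi"
    using sin_eq_0_pi[of "c - a"] assms(1-3) by force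
  then show False
  proof
    assume "c = a"
    then show False using assms(1,2) opposite by (simp add: A_def B_def)
  next
    assume "c = a + pi"
    then have "C * B = - (A * B)" by (simp add: A_def C_def angle_normal_add_pi)
    then show False using opposite by linarith
  qed
qed

definition double_wedge :: "real^2 \<Rightarrow> real \<Rightarrow> real \<Rightarrow> (real^2) set" where
  "double_wedge q a b = R_minus [line_at q a, line_at q b]"

lemma mem_double_wedge:
  "p \<in> double_wedge q a b \<longleftrightarrow> (0 \<le> angle_normal a \<bullet> (p - q)) \<noteq> (0 \<le> angle_normal b \<bullet> (p - q))"
  by (simp add: double_wedge_def R_minus_pair mem_pos_side_line_at)

lemma mem_double_wedge_split:
  "p \<in> double_wedge q a c \<longleftrightarrow> (p \<in> double_wedge q a b) \<noteq> (p \<in> double_wedge q b c)"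
  by (auto simp: mem_double_wedge)

lemma mem_double_wedge_half_turn:
  "p \<notin> line_set (line_at q a) \<Longrightarrow> p \<in> double_wedge q a (a + pi)"
  by (auto simp: mem_double_wedge mem_line_set_line_at angle_normal_add_pi)

lemma mem_double_wedge_add_pi:
  "p \<notin> line_set (line_at q a) \<Longrightarrow> p \<notin> line_set (line_at q b) \<Longrightarrow>
    p \<in> double_wedge q (a + pi) (b + pi) \<longleftrightarrow> p \<in> double_wedge q a b"
  by (auto simp: mem_double_wedge mem_line_set_line_at angle_normal_add_pi)

lemma double_wedges_disjoint:
  assumes "a \<le> b" "b \<le> c" "c \<le> a + pi"
    and "p \<notin> line_set (line_at q a)" "p \<notin> line_set (line_at q b)" "p \<notin> line_set (line_at q c)"
  shows "p \<notin> double_wedge q a b \<inter> double_wedge q b c"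
  using angle_normal_sign_changes_once[OF assms(1-3), of "p - q"] assms(4-6)
  by (auto simp: mem_double_wedge mem_line_set_line_at)

lemma eventually_pos_side_line_at:
  assumes "p \<notin> line_set (line_at q t0)" "(t \<longlongrightarrow> t0) F"
  shows "eventually (\<lambda>n. p \<in> pos_side (line_at q (t n)) \<longleftrightarrow> p \<in> pos_side (line_at q t0)) F"
proof -
  have lim: "((\<lambda>n. angle_normal (t n) \<bullet> (p - q)) \<longlongrightarrow> angle_normal t0 \<bullet> (p - q)) F"
  proof (rule isCont_tendsto_compose[OF _ assms(2)])
    show "isCont (\<lambda>s. angle_normal s \<bullet> (p - q)) t0"
      unfolding angle_normal_inner by (intro continuous_intros)
  qed
  have "angle_normal t0 \<bullet> (p - q) \<noteq> 0" using assms(1) by (simp add: mem_line_set_line_at)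
  then consider "0 < angle_normal t0 \<bullet> (p - q)" | "angle_normal t0 \<bullet> (p - q) < 0" by linarith
  then show ?thesis
  proof cases
    case 1
    from order_tendstoD(1)[OF lim this] show ?thesis
      by eventually_elim (use 1 in \<open>auto simp: mem_pos_side_line_at\<close>)
  next
    case 2
    from order_tendstoD(2)[OF lim this] show ?thesis
      by eventually_elim (use 2 in \<open>auto simp: mem_pos_side_line_at\<close>)
  qed
qed

context
  fixes M :: "(real^2) measure" and q :: "real^2"
  assumes md: "mass_distribution M"
begin

lemma line_at_null: "line_set (line_at q t) \<in> null_sets M"
  using md oriented_line_line_at by (rule line_set_null)

lemma double_wedge_sets: "double_wedge q a b \<in> sets M"
  unfolding double_wedge_def using md by (rule R_minus_sets)

lemma measure_double_wedge_half_turn: "measure M (double_wedge q a (a + pi)) = measure M UNIV"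
proof (rule measure_eq_AE)
  show "AE p in M. p \<in> double_wedge q a (a + pi) \<longleftrightarrow> p \<in> UNIV"
    by (rule AE_I'[OF line_at_null]) (auto intro: mem_double_wedge_half_turn)
qed (use double_wedge_sets mass_distribution_space[OF md] sets.top[of M] in auto)

lemma measure_double_wedge_add_pi:
  "measure M (double_wedge q (a + pi) (b + pi)) = measure M (double_wedge q a b)"
proof (rule measure_eq_AE)
  show "AE p in M. p \<in> double_wedge q (a + pi) (b + pi) \<longleftrightarrow> p \<in> double_wedge q a b"
    by (rule AE_I'[OF null_sets.Un[OF line_at_null[of a] line_at_null[of b]]])
      (use mem_double_wedge_add_pi in blast)
qed (use double_wedge_sets in auto)

lemma measure_double_wedge_add:
  assumes "a \<le> b" "b \<le> c" "c \<le> a + pi"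
  shows "measure M (double_wedge q a c) = measure M (double_wedge q a b) + measure M (double_wedge q b c)"
proof -
  interpret finite_measure M by (rule mass_distribution_finite_measure[OF md])
  let ?N = "line_set (line_at q a) \<union> line_set (line_at q b) \<union> line_set (line_at q c)"
  have N: "?N \<in> null_sets M" by (intro null_sets.Un line_at_null)
  have disjoint: "AE p in M. p \<notin> double_wedge q a b \<or> p \<notin> double_wedge q b c"
    by (rule AE_I'[OF N]) (use double_wedges_disjoint[OF assms] in blast)
  have "AE p in M. p \<in> double_wedge q a c \<longleftrightarrow> p \<in> double_wedge q a b \<union> double_wedge q b c"
    using disjoint by eventually_elim (auto simp: mem_double_wedge_split[of _ q a c b])
  then have "measure M (double_wedge q a c) = measure M (double_wedge q a b \<union> double_wedge q b c)"
    by (rule measure_eq_AE) (use double_wedge_sets in auto)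
  also have "\<dots> = measure M (double_wedge q a b) + measure M (double_wedge q b c)"
    using disjoint by (rule measure_Un_AE) (use double_wedge_sets fmeasurable_eq_sets in auto)
  finally show ?thesis .
qed

lemma continuous_measure_double_wedge:
  "continuous_on UNIV (\<lambda>t. measure M (double_wedge q (fst t) (snd t)))"
proof -
  interpret finite_measure M by (rule mass_distribution_finite_measure[OF md])
  let ?I = "\<lambda>t. indicator (double_wedge q (fst t) (snd t)) :: real^2 \<Rightarrow> real"
  have "continuous (at t0) (\<lambda>t. measure M (double_wedge q (fst t) (snd t)))" for t0
  proof (rule continuous_at_sequentiallyI)
    fix u :: "nat \<Rightarrow> real \<times> real" assume u: "u \<longlonglongrightarrow> t0"
    have "(\<lambda>n. ?I (u n) p) \<longlonglongrightarrow> ?I t0 p"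
      if "p \<notin> line_set (line_at q (fst t0))" "p \<notin> line_set (line_at q (snd t0))" for p
    proof (rule tendsto_eventually)
      show "eventually (\<lambda>n. ?I (u n) p = ?I t0 p) sequentially"
        using eventually_pos_side_line_at[OF that(1) tendsto_fst[OF u]]
          eventually_pos_side_line_at[OF that(2) tendsto_snd[OF u]]
        by eventually_elim (simp add: double_wedge_def R_minus_pair indicator_def)
    qed
    then have "AE p in M. (\<lambda>n. ?I (u n) p) \<longlonglongrightarrow> ?I t0 p"
      by (intro AE_I'[OF null_sets.Un[OF line_at_null[of "fst t0"] line_at_null[of "snd t0"]]]) auto
    then have "(\<lambda>n. integral\<^sup>L M (?I (u n))) \<longlonglongrightarrow> integral\<^sup>L M (?I t0)"
      by (intro integral_dominated_convergence[where w="\<lambda>_. 1"])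
        (auto simp: indicator_def intro: borel_measurable_indicator double_wedge_sets)
    then show "(\<lambda>n. measure M (double_wedge q (fst (u n)) (snd (u n))))
        \<longlonglongrightarrow> measure M (double_wedge q (fst t0) (snd t0))"
      by (simp add: mass_distribution_space[OF md])
  qed
  then show ?thesis by (simp add: continuous_at_imp_continuous_on)
qed

end

text \<open>Abstracts the normalised mass \<open>V a b\<close> of the double wedge between the lines through a
  point at angles \<open>a\<close> and \<open>b\<close>.\<close>
locale angular_mass =
  fixes V :: "real \<Rightarrow> real \<Rightarrow> real"
  assumes continuous: "continuous_on UNIV (\<lambda>t. V (fst t) (snd t))"
    and additive: "a \<le> b \<Longrightarrow> b \<le> c \<Longrightarrow> c \<le> a + pi \<Longrightarrow> V a c = V a b + V b c"
    and half_turn: "V a (a + pi) = 1"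
    and periodic: "V (a + pi) (b + pi) = V a b"
begin

lemma diagonal [simp]: "V a a = 0"
  using additive[of a a a] by simp

lemma continuous_on_compose_angles [continuous_intros]:
  "continuous_on S f \<Longrightarrow> continuous_on S g \<Longrightarrow> continuous_on S (\<lambda>x. V (f x) (g x))"
  using continuous_on_compose2[OF continuous, of S "\<lambda>x. (f x, g x)"]
  by (auto intro: continuous_on_Pair)

text \<open>The mass swept out by turning the line at angle \<open>0\<close> to angle \<open>t\<close>, for \<open>t \<in> [0, 2\<pi>]\<close>.\<close>
definition swept :: "real \<Rightarrow> real" where
  "swept t = (if t \<le> pi then V 0 t else 1 + V 0 (t - pi))"

lemma eq_swept_diff:
  assumes "0 \<le> x" "x \<le> pi" "0 \<le> y" "y \<le> pi"
  shows "V x (x + y) = swept (x + y) - swept x"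
proof (cases "x + y \<le> pi")
  case True
  then show ?thesis using additive[of 0 x "x + y"] assms by (simp add: swept_def)
next
  case False
  have "V x (x + y) = V x pi + V pi (x + y)"
    using additive[of x pi "x + y"] assms False by simp
  moreover have "V 0 pi = V 0 x + V x pi"
    using additive[of 0 x pi] assms by simp
  moreover have "V pi (x + y) = V 0 (x + y - pi)"
    using periodic[of 0 "x + y - pi"] by simp
  ultimately show ?thesis using False assms half_turn[of 0] by (simp add: swept_def)
qed

end

lemma clamp_fixed_imp_zero:
  fixes a b x f :: real
  assumes "a \<le> x" "x \<le> b" "max a (min b (x - f)) = x" "x = a \<Longrightarrow> f \<le> 0" "x = b \<Longrightarrow> 0 \<le> f"
  shows "f = 0"
  using assms by (cases "x = a"; cases "x = b") (auto simp: max_def min_def split: if_splits)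

text \<open>Brouwer's theorem for the map \<open>p \<mapsto> p - F p\<close> clamped to the rectangle.\<close>
lemma poincare_miranda_rectangle:
  fixes F :: "real \<times> real \<Rightarrow> real \<times> real"
  assumes "x0 \<le> x1" "y0 \<le> y1" and cont: "continuous_on ({x0..x1} \<times> {y0..y1}) F"
    and fst_F: "\<And>y. y0 \<le> y \<Longrightarrow> y \<le> y1 \<Longrightarrow> fst (F (x0, y)) \<le> 0 \<and> 0 \<le> fst (F (x1, y))"
    and snd_F: "\<And>x. x0 \<le> x \<Longrightarrow> x \<le> x1 \<Longrightarrow> snd (F (x, y0)) \<le> 0 \<and> 0 \<le> snd (F (x, y1))"
  obtains x y where "x0 \<le> x" "x \<le> x1" "y0 \<le> y" "y \<le> y1" "F (x, y) = 0"
proof -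
  define S where "S = {x0..x1} \<times> {y0..y1}"
  define G where "G p = (max x0 (min x1 (fst p - fst (F p))), max y0 (min y1 (snd p - snd (F p))))" for p
  have S: "compact S" "convex S" "S \<noteq> {}"
    using assms(1,2) by (auto simp: S_def compact_Times convex_Times)
  have "continuous_on S G"
    unfolding G_def S_def by (intro continuous_intros cont)
  moreover have "G \<in> S \<rightarrow> S" using assms(1,2) by (auto simp: G_def S_def)
  ultimately obtain x y where xy: "(x, y) \<in> S" "G (x, y) = (x, y)"
    using brouwer[OF S] by (metis surj_pair)
  have range: "x0 \<le> x" "x \<le> x1" "y0 \<le> y" "y \<le> y1" using xy(1) by (auto simp: S_def)
  have "fst (F (x, y)) = 0"
    by (rule clamp_fixed_imp_zero[OF range(1,2)]) (use xy(2) fst_F range in \<open>auto simp: G_def\<close>)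
  moreover have "snd (F (x, y)) = 0"
    by (rule clamp_fixed_imp_zero[OF range(3,4)]) (use xy(2) snd_F range in \<open>auto simp: G_def\<close>)
  ultimately show ?thesis using that range by (simp add: prod_eq_iff)
qed

lemma angular_masses_opposite_columns:
  assumes "angular_mass V1" "angular_mass V2"
  obtains a b where "a \<in> {0..pi}" "b \<in> {0..pi}"
    "\<And>y. y \<in> {0..pi} \<Longrightarrow> V1 a (a + y) \<le> V2 a (a + y)"
    "\<And>y. y \<in> {0..pi} \<Longrightarrow> V2 b (b + y) \<le> V1 b (b + y)"
proof -
  interpret V1: angular_mass V1 by fact
  interpret V2: angular_mass V2 by fact
  define D where "D t = V1 0 t - V2 0 t" for t
  have "continuous_on {0..pi} D" unfolding D_def by (intro continuous_intros)
  then obtain a b where ab: "a \<in> {0..pi}" "b \<in> {0..pi}" "\<And>t. t \<in> {0..pi} \<Longrightarrow> D b \<le> D t \<and> D t \<le> D a"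
    using continuous_attains_sup[of "{0..pi}" D] continuous_attains_inf[of "{0..pi}" D] by auto
  have swept: "D b \<le> V1.swept t - V2.swept t \<and> V1.swept t - V2.swept t \<le> D a" if "t \<in> {0..2 * pi}" for t
    using ab(3)[of t] ab(3)[of "t - pi"] that by (auto simp: V1.swept_def V2.swept_def D_def)
  have diff: "V1 x (x + y) - V2 x (x + y) = (V1.swept (x + y) - V2.swept (x + y)) - D x"
    if "x \<in> {0..pi}" "y \<in> {0..pi}" for x y
    using V1.eq_swept_diff[of x y] V2.eq_swept_diff[of x y] that
    by (simp add: V1.swept_def V2.swept_def D_def)
  show ?thesis
  proof
    show "V1 a (a + y) \<le> V2 a (a + y)" if "y \<in> {0..pi}" for y
      using diff[OF ab(1) that] swept[of "a + y"] ab(1) that by auto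
    show "V2 b (b + y) \<le> V1 b (b + y)" if "y \<in> {0..pi}" for y
      using diff[OF ab(2) that] swept[of "b + y"] ab(2) that by auto
  qed (use ab in auto)
qed

lemma angular_masses_common_half:
  assumes "angular_mass V1" "angular_mass V2"
  obtains x y where "0 < y" "y < pi" "V1 x (x + y) = 1/2" "V2 x (x + y) = 1/2"
proof -
  interpret V1: angular_mass V1 by fact
  interpret V2: angular_mass V2 by fact
  obtain a b where ab: "a \<in> {0..pi}" "b \<in> {0..pi}"
    "\<And>y. y \<in> {0..pi} \<Longrightarrow> V1 a (a + y) \<le> V2 a (a + y)"
    "\<And>y. y \<in> {0..pi} \<Longrightarrow> V2 b (b + y) \<le> V1 b (b + y)"
    using angular_masses_opposite_columns[OF assms] by blast
  define \<sigma> :: real where "\<sigma> = (if a \<le> b then 1 else -1)"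
  define F where "F p = (\<sigma> * (V1 (fst p) (fst p + snd p) - V2 (fst p) (fst p + snd p)),
                         V1 (fst p) (fst p + snd p) + V2 (fst p) (fst p + snd p) - 1)" for p
  have "\<exists>x y. 0 \<le> y \<and> y \<le> pi \<and> F (x, y) = 0"
  proof (rule poincare_miranda_rectangle[of "min a b" "max a b" 0 pi F])
    show "continuous_on ({min a b..max a b} \<times> {0..pi}) F"
      unfolding F_def by (intro continuous_intros)
    show "fst (F (min a b, y)) \<le> 0 \<and> 0 \<le> fst (F (max a b, y))" if "0 \<le> y" "y \<le> pi" for y
      using ab(3,4)[of y] that by (auto simp: F_def \<sigma>_def min_def max_def)
    show "snd (F (x, 0)) \<le> 0 \<and> 0 \<le> snd (F (x, pi))" for x
      by (simp add: F_def V1.half_turn V2.half_turn)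
  qed auto
  then obtain x y where y: "0 \<le> y" "y \<le> pi" and "F (x, y) = 0" by blast
  then have "V1 x (x + y) = V2 x (x + y)" "V1 x (x + y) + V2 x (x + y) = 1"
    by (simp_all add: F_def \<sigma>_def prod_eq_iff split: if_splits)
  then have half: "V1 x (x + y) = 1/2" "V2 x (x + y) = 1/2" by simp_all
  then have "y \<noteq> 0" "y \<noteq> pi" using V1.half_turn[of x] by auto
  with y have "0 < y" "y < pi" by auto
  then show ?thesis using half by (rule that)
qed

lemma angular_mass_double_wedge:
  assumes "mass_distribution M"
  shows "angular_mass (\<lambda>a b. measure M (double_wedge q a b) / measure M UNIV)"
proof
  have "0 < measure M UNIV" using assms by (rule mass_distribution_total_pos)
  then show "continuous_on UNIV (\<lambda>t. measure M (double_wedge q (fst t) (snd t)) / measure M UNIV)"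
    by (intro continuous_intros continuous_measure_double_wedge[OF assms]) auto
  show "measure M (double_wedge q a (a + pi)) / measure M UNIV = 1" for a
    using \<open>0 < measure M UNIV\<close> by (simp add: measure_double_wedge_half_turn[OF assms])
  show "measure M (double_wedge q a c) / measure M UNIV =
    measure M (double_wedge q a b) / measure M UNIV + measure M (double_wedge q b c) / measure M UNIV"
    if "a \<le> b" "b \<le> c" "c \<le> a + pi" for a b c
    using measure_double_wedge_add[OF assms that] by (simp add: add_divide_distrib)
qed (simp add: measure_double_wedge_add_pi[OF assms])

theorem theorem5:
  fixes \<mu>1 \<mu>2 :: "(real^2) measure" and q :: "real^2"
  assumes "mass_distribution \<mu>1" and "mass_distribution \<mu>2"
  shows "\<exists>l1 l2. oriented_line l1 \<and> oriented_line l2 \<and>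
           line_set l1 \<noteq> line_set l2 \<and>
           q \<in> line_set l1 \<and> q \<in> line_set l2 \<and>
           bisects [l1, l2] \<mu>1 \<and> bisects [l1, l2] \<mu>2"
proof -
  obtain x y where "0 < y" "y < pi"
    and half: "measure \<mu>1 (double_wedge q x (x + y)) / measure \<mu>1 UNIV = 1/2"
              "measure \<mu>2 (double_wedge q x (x + y)) / measure \<mu>2 UNIV = 1/2"
    using angular_masses_common_half[OF angular_mass_double_wedge angular_mass_double_wedge, OF assms]
    by blast
  have "bisects [line_at q x, line_at q (x + y)] \<mu>1" "bisects [line_at q x, line_at q (x + y)] \<mu>2"
    using half mass_distribution_total_pos[OF assms(1)] mass_distribution_total_pos[OF assms(2)]
    by (simp_all add: bisects_iff_half_mass assms flip: double_wedge_def)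
  moreover have "line_set (line_at q x) \<noteq> line_set (line_at q (x + y))"
    using \<open>0 < y\<close> \<open>y < pi\<close> by (rule line_set_line_at_neq)
  moreover have "q \<in> line_set (line_at q t)" for t by (simp add: mem_line_set_line_at)
  ultimately show ?thesis using oriented_line_line_at by blast
qed

end
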